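(* Let $p$ be a prime and $m\ge0$. For $d\ge0$ write $d=q^{(m)}_dp^m+r$ with $0\le r<p^m$. Let $x,y$ be the standard coordinates on $\mathbb{P}^1$ with $xy=1$, and put $\partial_x^{\langle d\rangle_{(m)}}=\frac{q^{(m)}_d!}{d!}\partial_x^d$ and $\partial_y^{\langle d\rangle_{(m)}}=\frac{q^{(m)}_d!}{d!}\partial_y^d$. Then for every $s\ge1$ $$\partial_y^{\langle s\rangle_{(m)}}=(-1)^s\sum_{t=1}^sa^{(m)}_{s,t}x^{s+t}\partial_x^{\langle t\rangle_{(m)}},\qquad a^{(m)}_{s,t}=\binom{s}{t}\frac{(s-1)!}{(t-1)!}\frac{q^{(m)}_s!}{s!}\Big(\frac{q^{(m)}_t!}{t!}\Big)^{-1}=\binom{s-1}{t-1}\frac{q^{(m)}_s!}{q^{(m)}_t!}.$$ These numbers are integers, and $a^{(m)}_{s,1}=q^{(m)}_s!$, $a^{(m)}_{s,s}=1$. *)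

theory Defs
  imports "HOL-Analysis.Analysis" "HOL-Computational_Algebra.Primes"
begin

definition qd :: "nat \<Rightarrow> nat \<Rightarrow> nat \<Rightarrow> nat" where
  "qd p m d = d div (p ^ m)"

definition dop :: "nat \<Rightarrow> nat \<Rightarrow> nat \<Rightarrow> (real \<Rightarrow> real) \<Rightarrow> real \<Rightarrow> real" where
  "dop p m d g z = (fact (qd p m d) / fact d) * (deriv ^^ d) g z"

definition acoef :: "nat \<Rightarrow> nat \<Rightarrow> nat \<Rightarrow> nat \<Rightarrow> real" where
  "acoef p m s t = real (s choose t) * (fact (s - 1) / fact (t - 1))
      * (fact (qd p m s) / fact s) / (fact (qd p m t) / fact t)"

end

theory Submission
  imports Defs
begin

text \<open>Differentiating y^-(n+t) * f^(t)(1/y) once gives -(n+t) times the corresponding term of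
  order n+1, minus the term with t+1 in place of t. Hence the n-th derivative of f(1/y) is
  (-1)^n * \<Sum>t L(n,t) x^(n+t) f^(t)(x) with x = 1/y, where the unsigned Lah numbers
  L(n,t) = C(n-1,t-1) n!/t! obey exactly this recursion. Rescaling by q_s!/s! and t!/q_t! turns
  L(s,t) into a_{s,t} = C(s-1,t-1) q_s!/q_t!, an integer since q_t \<le> q_s.\<close>

fun lah :: "nat \<Rightarrow> nat \<Rightarrow> nat" where
  "lah 0 0 = 1"
| "lah 0 (Suc k) = 0"
| "lah (Suc n) 0 = 0"
| "lah (Suc n) (Suc k) = (n + Suc k) * lah n (Suc k) + lah n k"

lemma lah_eq_0_if_less: "n < k \<Longrightarrow> lah n k = 0"
  by (induction n k rule: lah.induct) auto

lemma Suc_times_binomial_Suc_add: "Suc k * (n choose Suc k) + k * (n choose k) = n * (n choose k)"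
  using Suc_times_binomial_eq[of n k] by (simp add: algebra_simps)

lemma lah_Suc_Suc_times_fact:
  "lah (Suc n) (Suc k) * fact (Suc k) = (n choose k) * fact (Suc n)"
proof (induction n arbitrary: k)
  case 0
  then show ?case by (cases k) auto
next
  case (Suc n)
  show ?case
  proof (cases k)
    case 0
    then show ?thesis using Suc.IH[of 0] by simp
  next
    case (Suc j)
    have "lah (Suc (Suc n)) (Suc k) * fact (Suc k)
        = (Suc n + Suc k) * (lah (Suc n) (Suc k) * fact (Suc k))
          + Suc k * (lah (Suc n) (Suc j) * fact (Suc j))"
      by (simp add: Suc algebra_simps)
    also have "\<dots> = ((n + k + 2) * (n choose k) + Suc k * (n choose j)) * fact (Suc n)"
      by (simp only: Suc.IH) (simp add: algebra_simps)
    also have "(n + k + 2) * (n choose k) + Suc k * (n choose j) = (n + 2) * (Suc n choose k)"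
      using Suc_times_binomial_Suc_add[of j n] by (simp add: Suc algebra_simps)
    finally show ?thesis by (simp add: algebra_simps)
  qed
qed

lemma lah_eq_binomial:
  assumes "1 \<le> n" "1 \<le> k"
  shows "real (lah n k) = real ((n - 1) choose (k - 1)) * fact n / fact k"
proof -
  obtain a b where n: "n = Suc a" and k: "k = Suc b"
    using assms by (cases n; cases k) auto
  have "real (lah n k) * fact k = real ((n - 1) choose (k - 1)) * fact n"
    using lah_Suc_Suc_times_fact[of a b] unfolding n k by (metis of_nat_fact of_nat_mult diff_Suc_1)
  then show ?thesis
    by (simp add: field_simps)
qed

lemma sum_lah_Suc:
  fixes X :: "nat \<Rightarrow> 'a::comm_semiring_1"
  shows "(\<Sum>t\<le>Suc n. of_nat (lah (Suc n) t) * X t)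
       = (\<Sum>t\<le>n. of_nat (lah n t) * (of_nat (n + t) * X t + X (Suc t)))"
proof -
  define g where "g t = of_nat (n + t) * of_nat (lah n t) * X t" for t
  have "(\<Sum>t\<le>n. g t) = (\<Sum>t\<le>Suc n. g t)"
    by (simp add: g_def lah_eq_0_if_less)
  also have "\<dots> = (\<Sum>t\<le>n. g (Suc t))"
    unfolding sum.atMost_Suc_shift by (cases n) (simp_all add: g_def)
  finally have shift: "(\<Sum>t\<le>n. g (Suc t)) = (\<Sum>t\<le>n. g t)" ..
  have "(\<Sum>t\<le>Suc n. of_nat (lah (Suc n) t) * X t)
      = (\<Sum>t\<le>n. of_nat (lah (Suc n) (Suc t)) * X (Suc t))"
    by (simp only: sum.atMost_Suc_shift) simp
  also have "\<dots> = (\<Sum>t\<le>n. g (Suc t) + of_nat (lah n t) * X (Suc t))"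
    by (simp add: g_def algebra_simps)
  also have "\<dots> = (\<Sum>t\<le>n. g t + of_nat (lah n t) * X (Suc t))"
    by (simp only: sum.distrib shift)
  finally show ?thesis
    by (simp add: g_def algebra_simps)
qed

lemma has_real_derivative_power_reciprocal_comp:
  fixes h :: "real \<Rightarrow> real"
  assumes "y \<noteq> 0" and "(h has_real_derivative D) (at (1 / y))"
  shows "((\<lambda>z. (1 / z) ^ k * h (1 / z)) has_real_derivative
           - ((1 / y) ^ (k + 1) * (of_nat k * h (1 / y) + 1 / y * D))) (at y)"
proof -
  have reciprocal: "((\<lambda>z. 1 / z) has_real_derivative - ((1 / y) ^ 2)) (at y)"
    using DERIV_inverse[OF \<open>y \<noteq> 0\<close>] by (simp add: inverse_eq_divide power2_eq_square)
  show ?thesis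
    by (rule DERIV_cong[OF DERIV_mult[OF DERIV_power[OF reciprocal] DERIV_chain2[OF assms(2) reciprocal]]])
      (cases k; simp add: power2_eq_square algebra_simps add_divide_distrib)
qed

lemma higher_deriv_comp_reciprocal:
  fixes f :: "real \<Rightarrow> real"
  assumes differentiable: "\<And>n x. x \<noteq> 0 \<Longrightarrow> (deriv ^^ n) f differentiable (at x)"
    and "y \<noteq> 0"
  shows "(deriv ^^ n) (\<lambda>z. f (1 / z)) y
     = (-1) ^ n * (\<Sum>t\<le>n. of_nat (lah n t) * ((1 / y) ^ (n + t) * (deriv ^^ t) f (1 / y)))"
  using \<open>y \<noteq> 0\<close>
proof (induction n arbitrary: y)
  case 0
  then show ?case by simp
next
  case (Suc n)
  define u where "u = 1 / y"
  define X where "X t = u ^ (Suc n + t) * (deriv ^^ t) f u" for t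
  have "u \<noteq> 0"
    using Suc.prems by (simp add: u_def)
  then have "((deriv ^^ t) f has_real_derivative (deriv ^^ Suc t) f u) (at u)" for t
    using differentiable by (simp add: DERIV_deriv_iff_real_differentiable)
  then have "((\<lambda>z. (-1) ^ n * (\<Sum>t\<le>n. of_nat (lah n t) * ((1 / z) ^ (n + t) * (deriv ^^ t) f (1 / z))))
      has_real_derivative (-1) ^ n * (\<Sum>t\<le>n. of_nat (lah n t) *
        - (u ^ (n + t + 1) * (of_nat (n + t) * (deriv ^^ t) f u + u * (deriv ^^ Suc t) f u)))) (at y)"
    unfolding u_def
    by (intro DERIV_cmult DERIV_sum has_real_derivative_power_reciprocal_comp Suc.prems) simp
  also have "(-1) ^ n * (\<Sum>t\<le>n. of_nat (lah n t) *
        - (u ^ (n + t + 1) * (of_nat (n + t) * (deriv ^^ t) f u + u * (deriv ^^ Suc t) f u)))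
      = (-1) ^ Suc n * (\<Sum>t\<le>n. of_nat (lah n t) * (of_nat (n + t) * X t + X (Suc t)))"
  proof -
    have "(\<Sum>t\<le>n. of_nat (lah n t) *
          - (u ^ (n + t + 1) * (of_nat (n + t) * (deriv ^^ t) f u + u * (deriv ^^ Suc t) f u)))
        = - (\<Sum>t\<le>n. of_nat (lah n t) * (of_nat (n + t) * X t + X (Suc t)))"
      unfolding sum_negf[symmetric] by (intro sum.cong) (simp_all add: X_def algebra_simps)
    then show ?thesis
      by simp
  qed
  finally have "((deriv ^^ n) (\<lambda>z. f (1 / z)) has_real_derivative
      (-1) ^ Suc n * (\<Sum>t\<le>n. of_nat (lah n t) * (of_nat (n + t) * X t + X (Suc t)))) (at y)"
    by (rule has_field_derivative_transform_within_open[where S = "- {0}"]) (use Suc in auto)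
  then have "(deriv ^^ Suc n) (\<lambda>z. f (1 / z)) y
      = (-1) ^ Suc n * (\<Sum>t\<le>Suc n. of_nat (lah (Suc n) t) * X t)"
    by (simp add: DERIV_imp_deriv sum_lah_Suc del: sum.atMost_Suc)
  then show ?case
    by (simp add: X_def u_def del: sum.atMost_Suc)
qed

lemma qd_mono: "t \<le> s \<Longrightarrow> qd p m t \<le> qd p m s"
  unfolding qd_def by (rule div_le_mono)

lemma acoef_eq_binomial:
  assumes "1 \<le> t" "t \<le> s"
  shows "acoef p m s t = real ((s - 1) choose (t - 1)) * fact (qd p m s) / fact (qd p m t)"
proof -
  obtain a b where s: "s = Suc a" and t: "t = Suc b"
    using assms by (cases s; cases t) auto
  have "real (Suc b) * real (Suc a choose Suc b) = real (Suc a) * real (a choose b)"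
    using Suc_times_binomial[of b a] by (metis of_nat_mult)
  then show ?thesis
    unfolding acoef_def s t fact_Suc diff_Suc_1 of_nat_mult
    by (simp add: divide_simps) (simp add: algebra_simps)
qed

lemma acoef_eq_of_nat:
  assumes "1 \<le> t" "t \<le> s"
  shows "acoef p m s t = of_nat (((s - 1) choose (t - 1)) * (fact (qd p m s) div fact (qd p m t)))"
proof -
  have "fact (qd p m t) dvd (fact (qd p m s) :: nat)"
    using assms by (intro fact_dvd qd_mono)
  then show ?thesis
    using assms by (simp add: acoef_eq_binomial real_of_nat_div)
qed

lemma acoef_times_dop:
  assumes "1 \<le> t" "t \<le> s"
  shows "acoef p m s t * dop p m t f x = fact (qd p m s) / fact s * real (lah s t) * (deriv ^^ t) f x"
  using assms unfolding dop_def acoef_eq_binomial[OF assms] lah_eq_binomial[OF order_trans[OF assms] assms(1)]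
  by simp

lemma dop_comp_reciprocal:
  fixes f :: "real \<Rightarrow> real"
  assumes differentiable: "\<And>n x. x \<noteq> 0 \<Longrightarrow> (deriv ^^ n) f differentiable (at x)"
    and "x \<noteq> 0" "1 \<le> s"
  shows "dop p m s (\<lambda>y. f (1 / y)) (1 / x)
       = (-1) ^ s * (\<Sum>t = 1..s. acoef p m s t * x ^ (s + t) * dop p m t f x)"
proof -
  have "(deriv ^^ s) (\<lambda>y. f (1 / y)) (1 / x)
      = (-1) ^ s * (\<Sum>t\<le>s. real (lah s t) * (x ^ (s + t) * (deriv ^^ t) f x))"
    using higher_deriv_comp_reciprocal[OF differentiable, of "1 / x" s] \<open>x \<noteq> 0\<close> by simp
  also have "(\<Sum>t\<le>s. real (lah s t) * (x ^ (s + t) * (deriv ^^ t) f x))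
      = (\<Sum>t = 1..s. real (lah s t) * (x ^ (s + t) * (deriv ^^ t) f x))"
    using \<open>1 \<le> s\<close> by (cases s) (simp_all add: atMost_atLeast0 sum.atLeast_Suc_atMost)
  finally have "dop p m s (\<lambda>y. f (1 / y)) (1 / x)
      = (-1) ^ s * (\<Sum>t = 1..s. fact (qd p m s) / fact s * real (lah s t) * (deriv ^^ t) f x * x ^ (s + t))"
    by (simp add: dop_def sum_distrib_left algebra_simps)
  also have "\<dots> = (-1) ^ s * (\<Sum>t = 1..s. acoef p m s t * x ^ (s + t) * dop p m t f x)"
  proof (intro arg_cong[where f = "(*) ((-1) ^ s)"] sum.cong refl)
    fix t
    assume "t \<in> {1..s}"
    then have "acoef p m s t * dop p m t f x
        = fact (qd p m s) / fact s * real (lah s t) * (deriv ^^ t) f x"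
      by (simp add: acoef_times_dop)
    then show "fact (qd p m s) / fact s * real (lah s t) * (deriv ^^ t) f x * x ^ (s + t)
        = acoef p m s t * x ^ (s + t) * dop p m t f x"
      by (metis mult.assoc mult.commute)
  qed
  finally show ?thesis .
qed

theorem mainTheorem11:
  fixes p m s :: nat
  assumes "prime p" and "s \<ge> 1"
  shows "(\<forall>f :: real \<Rightarrow> real.
            (\<forall>n x. x \<noteq> 0 \<longrightarrow> (deriv ^^ n) f differentiable (at x)) \<longrightarrow>
            (\<forall>x :: real. x \<noteq> 0 \<longrightarrow>
               dop p m s (\<lambda>y. f (1 / y)) (1 / x)
                 = (-1) ^ s * (\<Sum>t = 1..s. acoef p m s t * x ^ (s + t) * dop p m t f x)))
       \<and> (\<forall>t \<in> {1..s}. acoef p m s t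
              = real ((s - 1) choose (t - 1)) * fact (qd p m s) / fact (qd p m t)
            \<and> acoef p m s t \<in> \<int>)
       \<and> acoef p m s 1 = fact (qd p m s)
       \<and> acoef p m s s = 1"
proof (intro conjI allI impI ballI)
  show "dop p m s (\<lambda>y. f (1 / y)) (1 / x)
      = (-1) ^ s * (\<Sum>t = 1..s. acoef p m s t * x ^ (s + t) * dop p m t f x)"
    if "\<forall>n x. x \<noteq> 0 \<longrightarrow> (deriv ^^ n) f differentiable (at x)" and "x \<noteq> 0" for f x
    using that \<open>s \<ge> 1\<close> by (intro dop_comp_reciprocal) auto
  show "acoef p m s t = real ((s - 1) choose (t - 1)) * fact (qd p m s) / fact (qd p m t)"
    and "acoef p m s t \<in> \<int>" if "t \<in> {1..s}" for t
    using that acoef_eq_binomial acoef_eq_of_nat[of t s p m] by auto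
  have "qd p m 1 \<le> 1"
    unfolding qd_def by (rule div_le_dividend)
  then have "fact (qd p m 1) = (1 :: real)"
    by (cases "qd p m 1") simp_all
  then show "acoef p m s 1 = fact (qd p m s)"
    using \<open>s \<ge> 1\<close> by (simp add: acoef_eq_binomial)
  show "acoef p m s s = 1"
    using \<open>s \<ge> 1\<close> by (simp add: acoef_eq_binomial)
qed

end
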